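(* Let $P$ be a rooted tree poset with $n$ elements and let $L$ be a labeling of $P$ such that $L^{-1}(n)$ is the maximal element (root) of $P$. Let $b$ be the highest branch vertex of $P$, let $c_1<_P\cdots<_P c_k$ be the $L$-golden elements $x$ with $x\ge_P b$ (these form a chain, and $c_k$ is the root), and let $\mathcal M$ be the set of maximal $L$-golden rooted subtrees of $P$ whose roots are less than $b$. Then \[|\partial^{-1}(L)|=2^{k-1}+\sum_{T\in\mathcal M}\sum_{x\in T}2^{\omega_T(x)+k-2},\] where $\omega_T(x)$ is the number of elements on the path $x=p_1\lessdot p_2\lessdot\cdots\lessdot p_{\omega_T(x)}$ from $x$ to the root of $T$ in the Hasse diagram of the induced subposet $T$.
   Context: A labeling of an $n$-element poset $P$ is a bijection $L:P\to[n]$; promotion $\partial$ is defined as follows: for non-maximal $x$, the $L$-successor of $x$ is the element greater than $x$ with minimal label; the promotion chain is $v_1=L^{-1}(1)$, $v_{i+1}$ the $L$-successor of $v_i$, ending at the first maximal element $v_m$; $\partial(L)(x)=L(x)-1$ for $x$ off the chain, $\partial(L)(v_i)=L(v_{i+1})-1$ for $i<m$, $\partial(L)(v_m)=n$. A rooted tree poset is a connected poset in which every element is covered by at most one element (so it has a unique maximal element, the root). An element $x$ is $L$-golden if $L(y)>L(x)$ for all $y>_P x$; a set is $L$-golden if all its elements are. A subset of $P$ is a subtree if its induced subposet is a rooted tree poset. The highest branch vertex $b$ is the largest element of $P$ that covers more than one element (if no element covers more than one element, i.e. $P$ is a chain, take $b$ to be the minimum of $P$); the set $\{x: x\ge_P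 b\}$ is a chain. Here $\mathcal M$ consists of the maximal subsets $T$ of $\{x\in P: x \text{ is } L\text{-golden},\ x<_P b\}$ whose induced subposet is a rooted tree (equivalently, the connected components of the induced subposet on that set). *)

theory Defs
  imports Main
begin

definition poset :: "'a set \<Rightarrow> ('a \<Rightarrow> 'a \<Rightarrow> bool) \<Rightarrow> bool" where
  "poset P le \<longleftrightarrow> (\<forall>x\<in>P. le x x)
     \<and> (\<forall>x\<in>P. \<forall>y\<in>P. le x y \<and> le y x \<longrightarrow> x = y)
     \<and> (\<forall>x\<in>P. \<forall>y\<in>P. \<forall>z\<in>P. le x y \<and> le y z \<longrightarrow> le x z)"

definition lt :: "('a \<Rightarrow> 'a \<Rightarrow> bool) \<Rightarrow> 'a \<Rightarrow> 'a \<Rightarrow> bool" where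
  "lt le x y \<longleftrightarrow> le x y \<and> x \<noteq> y"

definition maximal :: "'a set \<Rightarrow> ('a \<Rightarrow> 'a \<Rightarrow> bool) \<Rightarrow> 'a \<Rightarrow> bool" where
  "maximal P le x \<longleftrightarrow> x \<in> P \<and> (\<forall>y\<in>P. le x y \<longrightarrow> y = x)"

definition covers :: "'a set \<Rightarrow> ('a \<Rightarrow> 'a \<Rightarrow> bool) \<Rightarrow> 'a \<Rightarrow> 'a \<Rightarrow> bool" where
  "covers P le x y \<longleftrightarrow> x \<in> P \<and> y \<in> P \<and> lt le x y \<and> \<not> (\<exists>z\<in>P. lt le x z \<and> lt le z y)"

definition poset_connected :: "'a set \<Rightarrow> ('a \<Rightarrow> 'a \<Rightarrow> bool) \<Rightarrow> bool" where
  "poset_connected P le \<longleftrightarrow>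
     (\<forall>x\<in>P. \<forall>y\<in>P. (x, y) \<in> {(a, b). a \<in> P \<and> b \<in> P \<and> (le a b \<or> le b a)}\<^sup>*)"

definition rooted_tree :: "'a set \<Rightarrow> ('a \<Rightarrow> 'a \<Rightarrow> bool) \<Rightarrow> bool" where
  "rooted_tree P le \<longleftrightarrow> finite P \<and> P \<noteq> {} \<and> poset P le \<and> poset_connected P le
     \<and> (\<forall>x\<in>P. card {y\<in>P. covers P le x y} \<le> 1)"

text \<open>Labelings of P: bijections P \<rightarrow> {1..n}, extended by 0 outside P (so that the set of
  labelings is finite).\<close>
definition labelings :: "'a set \<Rightarrow> ('a \<Rightarrow> nat) set" where
  "labelings P = {L. bij_betw L P {1..card P} \<and> (\<forall>x. x \<notin> P \<longrightarrow> L x = 0)}"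

definition lsucc :: "'a set \<Rightarrow> ('a \<Rightarrow> 'a \<Rightarrow> bool) \<Rightarrow> ('a \<Rightarrow> nat) \<Rightarrow> 'a \<Rightarrow> 'a" where
  "lsucc P le L x = (SOME y. y \<in> P \<and> lt le x y \<and> (\<forall>z\<in>P. lt le x z \<longrightarrow> L y \<le> L z))"

inductive_set pchain :: "'a set \<Rightarrow> ('a \<Rightarrow> 'a \<Rightarrow> bool) \<Rightarrow> ('a \<Rightarrow> nat) \<Rightarrow> 'a set"
  for P le L where
  start: "x \<in> P \<Longrightarrow> L x = 1 \<Longrightarrow> x \<in> pchain P le L"
| step: "v \<in> pchain P le L \<Longrightarrow> \<not> maximal P le v \<Longrightarrow> lsucc P le L v \<in> pchain P le L"

definition promote :: "'a set \<Rightarrow> ('a \<Rightarrow> 'a \<Rightarrow> bool) \<Rightarrow> ('a \<Rightarrow> nat) \<Rightarrow> 'a \<Rightarrow> nat" where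
  "promote P le L x =
     (if x \<in> pchain P le L then
        (if maximal P le x then card P else L (lsucc P le L x) - 1)
      else L x - 1)"

definition golden :: "'a set \<Rightarrow> ('a \<Rightarrow> 'a \<Rightarrow> bool) \<Rightarrow> ('a \<Rightarrow> nat) \<Rightarrow> 'a \<Rightarrow> bool" where
  "golden P le L x \<longleftrightarrow> x \<in> P \<and> (\<forall>y\<in>P. lt le x y \<longrightarrow> L x < L y)"

definition is_branch :: "'a set \<Rightarrow> ('a \<Rightarrow> 'a \<Rightarrow> bool) \<Rightarrow> 'a \<Rightarrow> bool" where
  "is_branch P le x \<longleftrightarrow> x \<in> P \<and> card {y\<in>P. covers P le y x} \<ge> 2"

definition hbv :: "'a set \<Rightarrow> ('a \<Rightarrow> 'a \<Rightarrow> bool) \<Rightarrow> 'a" where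
  "hbv P le =
     (if \<exists>x. is_branch P le x
      then (THE x. is_branch P le x \<and> (\<forall>y. is_branch P le y \<longrightarrow> le y x))
      else (THE x. x \<in> P \<and> (\<forall>y\<in>P. le x y)))"

definition goldenM :: "'a set \<Rightarrow> ('a \<Rightarrow> 'a \<Rightarrow> bool) \<Rightarrow> ('a \<Rightarrow> nat) \<Rightarrow> 'a set set" where
  "goldenM P le L =
     (let G = {x\<in>P. golden P le L x \<and> lt le x (hbv P le)} in
      {T. T \<subseteq> G \<and> rooted_tree T le \<and>
          (\<forall>T'. T \<subseteq> T' \<and> T' \<subseteq> G \<and> rooted_tree T' le \<longrightarrow> T' = T)})"

text \<open>\<omega>_T(x): number of elements on the Hasse-diagram path from x to the root of the tree T,
  i.e. the number of elements of T weakly above x.\<close>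
definition omega :: "'a set \<Rightarrow> ('a \<Rightarrow> 'a \<Rightarrow> bool) \<Rightarrow> 'a \<Rightarrow> nat" where
  "omega T le x = card {y\<in>T. le x y}"

end

theory Submission
  imports Defs
begin

text \<open>A labeling M promotes to L exactly when its promotion chain C is a chain of L-golden
  elements containing the root, and then M is determined by C and L: off C it is L + 1, and along C
  each element carries the L-label of its predecessor in C plus one, the least element carrying 1.
  So the preimages of L correspond to the chains of golden elements through the root.
  The golden elements weakly above the highest branch vertex b form a chain of k elements ending in
  the root, and every golden element below b lies below all of them. Counting chains by their least
  element x, a chain with x < b consists of x, any set of elements strictly above x in the maximal
  golden subtree T containing x, and any subset of the k - 1 non-root golden elements above b; this
  gives 2 ^ (\<omega>_T(x) + k - 2) chains, while the chains inside the top chain contribute 2 ^ (k - 1).\<close>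

locale tree_poset =
  fixes P :: "'a set" and le :: "'a \<Rightarrow> 'a \<Rightarrow> bool"
  assumes rooted_tree: "rooted_tree P le"
begin

lemma finite_P: "finite P"
  and P_nonempty: "P \<noteq> {}"
  and poset_P: "poset P le"
  and connected_P: "poset_connected P le"
  and card_covers_le_1: "x \<in> P \<Longrightarrow> card {y\<in>P. covers P le x y} \<le> 1"
  using rooted_tree unfolding rooted_tree_def by blast+

lemma poset_refl: "x \<in> P \<Longrightarrow> le x x"
  using poset_P unfolding poset_def by blast

lemma poset_antisym: "x \<in> P \<Longrightarrow> y \<in> P \<Longrightarrow> le x y \<Longrightarrow> le y x \<Longrightarrow> x = y"
  using poset_P unfolding poset_def by blast

lemma poset_trans: "x \<in> P \<Longrightarrow> y \<in> P \<Longrightarrow> z \<in> P \<Longrightarrow> le x y \<Longrightarrow> le y z \<Longrightarrow> le x z"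
  using poset_P unfolding poset_def by blast

lemma lt_trans: "x \<in> P \<Longrightarrow> y \<in> P \<Longrightarrow> z \<in> P \<Longrightarrow> lt le x y \<Longrightarrow> lt le y z \<Longrightarrow> lt le x z"
  unfolding lt_def using poset_trans poset_antisym by metis

lemma lt_le_trans: "x \<in> P \<Longrightarrow> y \<in> P \<Longrightarrow> z \<in> P \<Longrightarrow> lt le x y \<Longrightarrow> le y z \<Longrightarrow> lt le x z"
  unfolding lt_def using poset_trans poset_antisym by metis

lemma le_lt_trans: "x \<in> P \<Longrightarrow> y \<in> P \<Longrightarrow> z \<in> P \<Longrightarrow> le x y \<Longrightarrow> lt le y z \<Longrightarrow> lt le x z"
  unfolding lt_def using poset_trans poset_antisym by metis

lemma lt_irrefl: "\<not> lt le x x"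
  by (simp add: lt_def)

lemma lt_asym: "x \<in> P \<Longrightarrow> y \<in> P \<Longrightarrow> lt le x y \<Longrightarrow> \<not> lt le y x"
  unfolding lt_def using poset_antisym by blast

lemma covers_unique: "covers P le x y \<Longrightarrow> covers P le x y' \<Longrightarrow> y = y'"
  using card_covers_le_1[of x] finite_P card_le_Suc0_iff_eq[of "{y\<in>P. covers P le x y}"]
  by (auto simp: covers_def)

definition strict_below :: "('a \<times> 'a) set" where
  "strict_below = {(x, y). x \<in> P \<and> y \<in> P \<and> lt le x y}"

lemma wf_strict_below: "wf strict_below"
  and wf_strict_above: "wf (strict_below\<inverse>)"
proof -
  have "strict_below \<subseteq> P \<times> P"
    by (auto simp: strict_below_def)
  hence "finite strict_below"
    using finite_P finite_subset by blast
  moreover have "trans strict_below"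
    using lt_trans by (auto simp: strict_below_def intro: transI)
  hence "acyclic strict_below"
    by (simp add: acyclic_def strict_below_def lt_irrefl)
  ultimately show "wf strict_below" "wf (strict_below\<inverse>)"
    by (simp_all add: finite_acyclic_wf finite_acyclic_wf_converse)
qed

lemma ex_minimal:
  assumes "S \<subseteq> P" "S \<noteq> {}" shows "\<exists>m\<in>S. \<forall>y\<in>S. \<not> lt le y m"
  using wf_strict_below[unfolded wf_eq_minimal] assms
  by (simp add: strict_below_def) (metis ex_in_conv subsetD)

lemma ex_maximal:
  assumes "S \<subseteq> P" "S \<noteq> {}" shows "\<exists>m\<in>S. \<forall>y\<in>S. \<not> lt le m y"
  using wf_strict_above[unfolded wf_eq_minimal] assms
  by (simp add: strict_below_def) (metis ex_in_conv subsetD)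

lemma ex_cover_above:
  assumes "x \<in> P" "z \<in> P" "lt le x z" shows "\<exists>c. covers P le x c \<and> le c z"
proof -
  obtain c where c: "c \<in> P" "lt le x c" "le c z"
    and min: "\<forall>w\<in>{w\<in>P. lt le x w \<and> le w z}. \<not> lt le w c"
    using ex_minimal[of "{w\<in>P. lt le x w \<and> le w z}"] assms poset_refl by blast
  have "\<not> lt le w c" if "w \<in> P" "lt le x w" for w
  proof
    assume "lt le w c"
    hence "le w z" using poset_trans[of w c z] that c assms by (simp add: lt_def)
    thus False using min that \<open>lt le w c\<close> by blast
  qed
  hence "covers P le x c" using c assms by (auto simp: covers_def)
  thus ?thesis using c by blast
qed

lemma ex_cover_below:
  assumes "x \<in> P" "z \<in> P" "lt le x z" shows "\<exists>c. le x c \<and> covers P le c z"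
proof -
  obtain c where c: "c \<in> P" "le x c" "lt le c z"
    and max: "\<forall>w\<in>{w\<in>P. le x w \<and> lt le w z}. \<not> lt le c w"
    using ex_maximal[of "{w\<in>P. le x w \<and> lt le w z}"] assms poset_refl by blast
  have "\<not> lt le w z" if "w \<in> P" "lt le c w" for w
  proof
    assume "lt le w z"
    hence "le x w" using poset_trans[of x c w] that c assms by (simp add: lt_def)
    thus False using max that \<open>lt le w z\<close> by blast
  qed
  hence "covers P le c z" using c assms by (auto simp: covers_def)
  thus ?thesis using c by blast
qed

text \<open>Induction upwards: the unique cover of x lies below both y and z.\<close>
lemma upper_bounds_comparable:
  assumes "x \<in> P" "y \<in> P" "z \<in> P" "le x y" "le x z" shows "le y z \<or> le z y"
  using assms
proof (induction x rule: wf_induct_rule[OF wf_strict_above])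
  case (1 x)
  show ?case
  proof (cases "x = y \<or> x = z")
    case True thus ?thesis using "1.prems" by blast
  next
    case False
    hence "lt le x y" "lt le x z" using "1.prems" by (auto simp: lt_def)
    then obtain c c' where c: "covers P le x c" "le c y" and c': "covers P le x c'" "le c' z"
      using ex_cover_above "1.prems" by metis
    have "c = c'" using covers_unique c c' by blast
    moreover have "c \<in> P" "(c, x) \<in> strict_below\<inverse>"
      using c "1.prems" by (auto simp: covers_def strict_below_def)
    ultimately show ?thesis using "1.IH" "1.prems" c c' by blast
  qed
qed

lemma ex_root: "\<exists>r\<in>P. \<forall>x\<in>P. le x r"
proof -
  obtain r where r: "r \<in> P" "\<forall>y\<in>P. \<not> lt le r y" using ex_maximal[of P] P_nonempty by blast
  have "le x r" if x: "x \<in> P" for x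
  proof -
    have "(r, x) \<in> {(a, b). a \<in> P \<and> b \<in> P \<and> (le a b \<or> le b a)}\<^sup>*"
      using connected_P r x unfolding poset_connected_def by blast
    thus "le x r"
    proof (induction rule: rtrancl_induct)
      case base thus ?case using poset_refl r by blast
    next
      case (step y z)
      hence yz: "y \<in> P" "z \<in> P" "le y z \<or> le z y" by auto
      show ?case
      proof (cases "le z y")
        case True thus ?thesis using poset_trans step yz r by blast
      next
        case False
        hence "le z r \<or> le r z" using upper_bounds_comparable[of y z r] step yz r by blast
        thus ?thesis using r(2) yz by (auto simp: lt_def)
      qed
    qed
  qed
  thus ?thesis using r by blast
qed

definition root :: 'a where
  "root = (SOME r. r \<in> P \<and> (\<forall>x\<in>P. le x r))"

lemma root_in_P: "root \<in> P"
  and le_root: "x \<in> P \<Longrightarrow> le x root"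
proof -
  have "root \<in> P \<and> (\<forall>x\<in>P. le x root)"
    unfolding root_def by (rule someI_ex) (use ex_root in blast)
  thus "root \<in> P" "x \<in> P \<Longrightarrow> le x root" by blast+
qed

lemma maximal_iff_root: "maximal P le x \<longleftrightarrow> x = root"
  using root_in_P le_root poset_antisym unfolding maximal_def by blast

lemma not_root_lt: "x \<in> P \<Longrightarrow> \<not> lt le root x"
  using root_in_P le_root poset_antisym by (auto simp: lt_def)

lemma lt_root: "x \<in> P \<Longrightarrow> x \<noteq> root \<Longrightarrow> lt le x root"
  using le_root by (simp add: lt_def)

lemma incomparable_below_branch:
  assumes x: "x \<in> P" and y: "y \<in> P" and incomp: "\<not> le x y" "\<not> le y x"
  shows "\<exists>z. is_branch P le z \<and> lt le x z \<and> lt le y z"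
proof -
  obtain z where z: "z \<in> P" "le x z" "le y z"
    and min: "\<forall>w\<in>{w\<in>P. le x w \<and> le y w}. \<not> lt le w z"
    using ex_minimal[of "{w\<in>P. le x w \<and> le y w}"] x y le_root root_in_P by blast
  have xz: "lt le x z" and yz: "lt le y z" using z incomp by (auto simp: lt_def)
  obtain c c' where c: "le x c" "covers P le c z" and c': "le y c'" "covers P le c' z"
    using ex_cover_below[OF x z(1) xz] ex_cover_below[OF y z(1) yz] by blast
  have "c \<noteq> c'"
    using c c' min by (auto simp: covers_def)
  moreover have "{c, c'} \<subseteq> {w\<in>P. covers P le w z}"
    using c c' by (auto simp: covers_def)
  ultimately have "2 \<le> card {w\<in>P. covers P le w z}"
    using finite_P card_mono[of "{w\<in>P. covers P le w z}" "{c, c'}"] by auto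
  thus ?thesis using z xz yz by (auto simp: is_branch_def)
qed

lemma hbv_in_P: "hbv P le \<in> P"
  and hbv_comparable: "x \<in> P \<Longrightarrow> le (hbv P le) x \<or> lt le x (hbv P le)"
proof -
  have "hbv P le \<in> P \<and> (\<forall>x\<in>P. le (hbv P le) x \<or> lt le x (hbv P le))"
  proof (cases "\<exists>x. is_branch P le x")
    case True
    then obtain m where m: "is_branch P le m" and max: "\<forall>y. is_branch P le y \<longrightarrow> \<not> lt le m y"
      using ex_maximal[of "{x. is_branch P le x}"] by (auto simp: is_branch_def)
    have mP: "m \<in> P" using m by (simp add: is_branch_def)
    have comparable: "le x m \<or> le m x" if "x \<in> P" for x
      using incomparable_below_branch[OF that mP] max by blast
    have below: "le y m" if "is_branch P le y" for y
      using comparable[of y] that max by (auto simp: is_branch_def lt_def)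
    have "hbv P le = m"
      unfolding hbv_def if_P[OF True]
    proof (rule the_equality)
      show "is_branch P le m \<and> (\<forall>y. is_branch P le y \<longrightarrow> le y m)" using m below by blast
    next
      fix z assume "is_branch P le z \<and> (\<forall>y. is_branch P le y \<longrightarrow> le y z)"
      thus "z = m" using m below poset_antisym mP by (auto simp: is_branch_def)
    qed
    thus ?thesis using comparable mP by (auto simp: lt_def)
  next
    case False
    obtain m where mP: "m \<in> P" and min: "\<forall>y\<in>P. \<not> lt le y m"
      using ex_minimal[of P] P_nonempty by blast
    have least: "\<forall>y\<in>P. le m y"
      using incomparable_below_branch[OF _ mP] False min by (auto simp: lt_def)
    have "hbv P le = m"
      unfolding hbv_def if_not_P[OF False]
      by (rule the_equality) (use mP least poset_antisym in blast)+
    thus ?thesis using least mP by simp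
  qed
  thus "hbv P le \<in> P" "x \<in> P \<Longrightarrow> le (hbv P le) x \<or> lt le x (hbv P le)" by blast+
qed

definition comparability :: "'a set \<Rightarrow> ('a \<times> 'a) set" where
  "comparability S = {(a, b). a \<in> S \<and> b \<in> S \<and> (le a b \<or> le b a)}"

lemma poset_connected_iff: "poset_connected S le \<longleftrightarrow> (\<forall>x\<in>S. \<forall>y\<in>S. (x, y) \<in> (comparability S)\<^sup>*)"
  by (simp add: poset_connected_def comparability_def)

lemma poset_connected_Un:
  assumes "poset_connected A le" "poset_connected B le" "A \<inter> B \<noteq> {}"
  shows "poset_connected (A \<union> B) le"
proof -
  obtain c where c: "c \<in> A" "c \<in> B" using assms(3) by blast
  have "comparability A \<subseteq> comparability (A \<union> B)" "comparability B \<subseteq> comparability (A \<union> B)"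
    by (auto simp: comparability_def)
  hence mono: "(comparability A)\<^sup>* \<union> (comparability B)\<^sup>* \<subseteq> (comparability (A \<union> B))\<^sup>*"
    using rtrancl_mono by blast
  have sym: "(comparability (A \<union> B))\<inverse> = comparability (A \<union> B)"
    by (auto simp: comparability_def)
  have to_c: "(x, c) \<in> (comparability (A \<union> B))\<^sup>*" if "x \<in> A \<union> B" for x
    using that assms c mono unfolding poset_connected_iff by blast
  hence "(c, x) \<in> (comparability (A \<union> B))\<^sup>*" if "x \<in> A \<union> B" for x
    using that sym by (metis converseD rtrancl_converse)
  thus ?thesis
    unfolding poset_connected_iff using to_c by (meson rtrancl_trans)
qed

lemma poset_connected_pair: "le x y \<Longrightarrow> x \<in> P \<Longrightarrow> y \<in> P \<Longrightarrow> poset_connected {x, y} le"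
  unfolding poset_connected_iff by (auto simp: comparability_def intro: r_into_rtrancl)

lemma rooted_tree_subset:
  assumes "S \<subseteq> P" "S \<noteq> {}" "poset_connected S le" shows "rooted_tree S le"
proof -
  have "finite S" using finite_P assms(1) finite_subset by blast
  moreover have "poset S le"
    unfolding poset_def using assms(1) poset_refl poset_antisym poset_trans by (meson subsetD)
  moreover have "card {y\<in>S. covers S le x y} \<le> 1" if "x \<in> S" for x
  proof -
    have "y = y'" if "covers S le x y" "covers S le x y'" for y y'
    proof (rule ccontr)
      assume "y \<noteq> y'"
      have "y \<in> S" "y' \<in> S" "lt le x y" "lt le x y'" using that by (auto simp: covers_def)
      hence "lt le y y' \<or> lt le y' y"
        using upper_bounds_comparable[of x y y'] \<open>x \<in> S\<close> \<open>y \<noteq> y'\<close> assms(1) by (auto simp: lt_def)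
      thus False using that \<open>y \<in> S\<close> \<open>y' \<in> S\<close> unfolding covers_def by blast
    qed
    thus ?thesis using card_le_Suc0_iff_eq[of "{y\<in>S. covers S le x y}"] \<open>finite S\<close> by auto
  qed
  ultimately show ?thesis unfolding rooted_tree_def using assms by blast
qed

definition maximal_subtrees :: "'a set \<Rightarrow> 'a set set" where
  "maximal_subtrees G = {T. T \<subseteq> G \<and> rooted_tree T le \<and>
     (\<forall>T'. T \<subseteq> T' \<and> T' \<subseteq> G \<and> rooted_tree T' le \<longrightarrow> T' = T)}"

lemma maximal_subtreesD:
  assumes "T \<in> maximal_subtrees G"
  shows "T \<subseteq> G" "rooted_tree T le"
    and "T \<subseteq> T' \<Longrightarrow> T' \<subseteq> G \<Longrightarrow> rooted_tree T' le \<Longrightarrow> T' = T"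
  using assms unfolding maximal_subtrees_def by blast+

lemma maximal_subtree_Un_eq:
  assumes G: "G \<subseteq> P" and T: "T \<in> maximal_subtrees G"
    and S: "S \<subseteq> G" "poset_connected S le" "T \<inter> S \<noteq> {}"
  shows "S \<subseteq> T"
proof -
  have "poset_connected (T \<union> S) le"
    using poset_connected_Un maximal_subtreesD(2)[OF T] S by (simp add: rooted_tree_def)
  hence "rooted_tree (T \<union> S) le"
    using rooted_tree_subset[of "T \<union> S"] G S maximal_subtreesD(1)[OF T] by blast
  thus ?thesis
    using maximal_subtreesD(3)[OF T, of "T \<union> S"] maximal_subtreesD(1)[OF T] S by blast
qed

lemma maximal_subtree_comparable_closed:
  assumes G: "G \<subseteq> P" and T: "T \<in> maximal_subtrees G"
    and "x \<in> T" "y \<in> G" "le x y \<or> le y x"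
  shows "y \<in> T"
proof -
  have "x \<in> P" "y \<in> P" using assms maximal_subtreesD(1)[OF T] by auto
  hence "poset_connected {x, y} le"
    using assms(5) poset_connected_pair[of x y] poset_connected_pair[of y x] by (auto simp: insert_commute)
  thus ?thesis
    using maximal_subtree_Un_eq[OF G T, of "{x, y}"] maximal_subtreesD(1)[OF T] assms(3,4) by blast
qed

lemma maximal_subtrees_disjoint:
  assumes G: "G \<subseteq> P" and T: "T \<in> maximal_subtrees G" and T': "T' \<in> maximal_subtrees G"
    and "T \<inter> T' \<noteq> {}"
  shows "T = T'"
proof -
  have "poset_connected T le" "poset_connected T' le"
    using maximal_subtreesD(2)[OF T] maximal_subtreesD(2)[OF T'] by (simp_all add: rooted_tree_def)
  thus ?thesis
    using maximal_subtree_Un_eq[OF G T, of T'] maximal_subtree_Un_eq[OF G T', of T]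
      maximal_subtreesD(1)[OF T] maximal_subtreesD(1)[OF T'] assms(4) by blast
qed

lemma maximal_subtrees_cover:
  assumes G: "G \<subseteq> P" and x: "x \<in> G" shows "\<exists>T\<in>maximal_subtrees G. x \<in> T"
proof -
  let ?C = "\<lambda>T. x \<in> T \<and> T \<subseteq> G \<and> rooted_tree T le"
  have "finite G" using finite_P G finite_subset by blast
  have "?C {x}"
    using rooted_tree_subset[of "{x}"] poset_connected_pair[of x x] poset_refl x G by auto
  moreover have "card T < card G + 1" if "?C T" for T
    using that \<open>finite G\<close> card_mono[of G T] by simp
  ultimately obtain T where T: "?C T" and Tmax: "\<And>T'. ?C T' \<Longrightarrow> card T' \<le> card T"
    using ex_has_greatest_nat[of ?C "{x}" card "card G + 1"] by blast
  have "T \<in> maximal_subtrees G"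
    unfolding maximal_subtrees_def
  proof (intro CollectI conjI allI impI)
    fix T' assume T': "T \<subseteq> T' \<and> T' \<subseteq> G \<and> rooted_tree T' le"
    moreover have "finite T'" using T' \<open>finite G\<close> finite_subset by blast
    ultimately show "T' = T" using Tmax[of T'] T card_seteq[of T' T] by blast
  qed (use T in blast)+
  thus ?thesis using T by blast
qed

lemma sum_maximal_subtrees:
  assumes G: "G \<subseteq> P"
  shows "(\<Sum>T\<in>maximal_subtrees G. \<Sum>x\<in>T. f (omega T le x)) = (\<Sum>x\<in>G. f (card {y\<in>G. le x y}))"
proof -
  have "finite G" using finite_P G finite_subset by blast
  have "(\<Sum>T\<in>maximal_subtrees G. \<Sum>x\<in>T. f (omega T le x))
      = (\<Sum>T\<in>maximal_subtrees G. \<Sum>x\<in>T. f (card {y\<in>G. le x y}))"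
  proof (intro sum.cong refl)
    fix T x assume T: "T \<in> maximal_subtrees G" and "x \<in> T"
    hence "{y\<in>T. le x y} = {y\<in>G. le x y}"
      using maximal_subtree_comparable_closed[OF G T] maximal_subtreesD(1)[OF T] by blast
    thus "f (omega T le x) = f (card {y\<in>G. le x y})" by (simp add: omega_def)
  qed
  also have "\<dots> = (\<Sum>x\<in>\<Union>(maximal_subtrees G). f (card {y\<in>G. le x y}))"
  proof (rule sum.Union_disjoint[symmetric, unfolded comp_def])
    show "\<forall>T\<in>maximal_subtrees G. finite T"
      using \<open>finite G\<close> maximal_subtreesD(1) finite_subset by blast
    show "\<forall>T\<in>maximal_subtrees G. \<forall>T'\<in>maximal_subtrees G. T \<noteq> T' \<longrightarrow> T \<inter> T' = {}"
      using maximal_subtrees_disjoint[OF G] by blast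
  qed
  also have "\<Union>(maximal_subtrees G) = G"
    using maximal_subtrees_cover[OF G] maximal_subtreesD(1) by blast
  finally show ?thesis .
qed

definition is_chain :: "'a set \<Rightarrow> bool" where
  "is_chain S \<longleftrightarrow> (\<forall>x\<in>S. \<forall>y\<in>S. le x y \<or> le y x)"

lemma chains_by_least_element:
  assumes X: "X \<subseteq> P"
  shows "{S. S \<subseteq> X \<and> is_chain S} = insert {} (\<Union>x\<in>X. insert x ` Pow {y\<in>X. lt le x y})"
proof (intro equalityI subsetI)
  fix S assume S: "S \<in> {S. S \<subseteq> X \<and> is_chain S}"
  show "S \<in> insert {} (\<Union>x\<in>X. insert x ` Pow {y\<in>X. lt le x y})"
  proof (cases "S = {}")
    case False
    then obtain m where m: "m \<in> S" "\<forall>y\<in>S. \<not> lt le y m"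
      using ex_minimal[of S] S X by blast
    have "lt le m y" if "y \<in> S - {m}" for y
    proof -
      have "le m y \<or> le y m" using S m that unfolding is_chain_def by blast
      thus ?thesis using m that by (auto simp: lt_def)
    qed
    hence "S - {m} \<subseteq> {y\<in>X. lt le m y}" using S by blast
    moreover have "S = insert m (S - {m})" using m by blast
    ultimately show ?thesis using m S by blast
  qed simp
next
  fix S assume "S \<in> insert {} (\<Union>x\<in>X. insert x ` Pow {y\<in>X. lt le x y})"
  then consider "S = {}"
    | x A where "x \<in> X" "A \<subseteq> {y\<in>X. lt le x y}" "S = insert x A" by blast
  thus "S \<in> {S. S \<subseteq> X \<and> is_chain S}"
  proof cases
    case 2
    have "y \<in> P \<and> le x y" if "y \<in> S" for y using 2 that X poset_refl by (auto simp: lt_def)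
    hence "is_chain S"
      unfolding is_chain_def using upper_bounds_comparable[of x] 2 X by (meson subsetD)
    thus ?thesis using 2 by auto
  qed (simp add: is_chain_def)
qed

lemma card_chains:
  assumes X: "X \<subseteq> P"
  shows "card {S. S \<subseteq> X \<and> is_chain S} = 1 + (\<Sum>x\<in>X. 2 ^ card {y\<in>X. lt le x y})"
proof -
  have "finite X" using finite_P X finite_subset by blast
  let ?F = "\<lambda>x. insert x ` Pow {y\<in>X. lt le x y}"
  have card_F: "card (?F x) = 2 ^ card {y\<in>X. lt le x y}" for x
  proof -
    have "inj_on (insert x) (Pow {y\<in>X. lt le x y})"
    proof (rule inj_onI)
      fix A B assume "A \<in> Pow {y\<in>X. lt le x y}" "B \<in> Pow {y\<in>X. lt le x y}" "insert x A = insert x B"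
      moreover have "x \<notin> A" "x \<notin> B" using calculation(1,2) lt_irrefl by blast+
      ultimately show "A = B" by (metis Diff_insert_absorb)
    qed
    thus ?thesis using \<open>finite X\<close> by (simp add: card_image card_Pow)
  qed
  have disjoint: "?F x \<inter> ?F x' = {}" if "x \<in> X" "x' \<in> X" "x \<noteq> x'" for x x'
  proof (rule ccontr)
    assume "?F x \<inter> ?F x' \<noteq> {}"
    then obtain A B where "A \<subseteq> {y\<in>X. lt le x y}" "B \<subseteq> {y\<in>X. lt le x' y}"
      and "insert x A = insert x' B" by blast
    hence "lt le x x'" "lt le x' x" using \<open>x \<noteq> x'\<close> by (metis insertE insertI1 mem_Collect_eq subsetD)+
    thus False using lt_asym that X by blast
  qed
  have "card {S. S \<subseteq> X \<and> is_chain S} = card (insert {} (\<Union>x\<in>X. ?F x))"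
    using chains_by_least_element[OF X] by simp
  also have "\<dots> = 1 + card (\<Union>x\<in>X. ?F x)"
  proof -
    have "finite (\<Union>x\<in>X. ?F x)" using \<open>finite X\<close> by simp
    moreover have "{} \<notin> (\<Union>x\<in>X. ?F x)" by blast
    ultimately show ?thesis by simp
  qed
  also have "card (\<Union>x\<in>X. ?F x) = (\<Sum>x\<in>X. card (?F x))"
    using \<open>finite X\<close> disjoint by (simp add: card_UN_disjoint)
  finally show ?thesis using card_F by simp
qed

lemma card_chains_of_chain:
  assumes "X \<subseteq> P" "is_chain X"
  shows "card {S. S \<subseteq> X \<and> is_chain S} = 2 ^ card X"
proof -
  have "{S. S \<subseteq> X \<and> is_chain S} = Pow X" using assms(2) by (auto simp: is_chain_def)
  thus ?thesis using finite_subset[OF assms(1) finite_P] by (simp add: card_Pow)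
qed

lemma card_chains_below_chain:
  assumes G: "G \<subseteq> P" and U: "U \<subseteq> P" "is_chain U" and disjoint: "G \<inter> U = {}"
    and below: "\<And>x u. x \<in> G \<Longrightarrow> u \<in> U \<Longrightarrow> lt le x u"
  shows "card {S. S \<subseteq> G \<union> U \<and> is_chain S}
       = 2 ^ card U + (\<Sum>x\<in>G. 2 ^ (card {y\<in>G. lt le x y} + card U))"
proof -
  have fin: "finite G" "finite U" using G U finite_P finite_subset by blast+
  have above_G: "card {y\<in>G \<union> U. lt le x y} = card {y\<in>G. lt le x y} + card U" if "x \<in> G" for x
  proof -
    have "{y\<in>G \<union> U. lt le x y} = {y\<in>G. lt le x y} \<union> U" using below that by blast
    thus ?thesis using fin disjoint by (simp add: card_Un_disjoint disjoint_iff)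
  qed
  have above_U: "{y\<in>G \<union> U. lt le x y} = {y\<in>U. lt le x y}" if "x \<in> U" for x
    using below[of _ x] lt_asym that G U by blast
  have "card {S. S \<subseteq> G \<union> U \<and> is_chain S} = 1 + (\<Sum>x\<in>G \<union> U. 2 ^ card {y\<in>G \<union> U. lt le x y})"
    using card_chains G U by simp
  also have "\<dots> = 1 + (\<Sum>x\<in>U. 2 ^ card {y\<in>U. lt le x y})
                   + (\<Sum>x\<in>G. 2 ^ (card {y\<in>G. lt le x y} + card U))"
    using fin disjoint above_G above_U by (simp add: sum.union_disjoint)
  also have "1 + (\<Sum>x\<in>U. 2 ^ card {y\<in>U. lt le x y}) = (2::nat) ^ card U"
    using card_chains[OF U(1)] card_chains_of_chain[OF U] by simp
  finally show ?thesis .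
qed

definition chain_pred :: "'a set \<Rightarrow> 'a \<Rightarrow> 'a" where
  "chain_pred C x = (THE v. v \<in> C \<and> lt le v x \<and> (\<forall>u\<in>C. lt le u x \<longrightarrow> le u v))"

lemma chain_pred_eqI:
  assumes "C \<subseteq> P" "v \<in> C" "lt le v x" "\<forall>u\<in>C. lt le u x \<longrightarrow> le u v"
  shows "chain_pred C x = v"
  unfolding chain_pred_def using assms poset_antisym by (intro the_equality) (blast, meson subsetD)

lemma chain_pred:
  assumes C: "C \<subseteq> P" "is_chain C" and ex: "\<exists>v\<in>C. lt le v x"
  shows "chain_pred C x \<in> C" "lt le (chain_pred C x) x"
    and "u \<in> C \<Longrightarrow> lt le u x \<Longrightarrow> le u (chain_pred C x)"
proof -
  obtain m where m: "m \<in> C" "lt le m x" and max: "\<forall>y\<in>{v\<in>C. lt le v x}. \<not> lt le m y"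
    using ex_maximal[of "{v\<in>C. lt le v x}"] C ex by blast
  have below_m: "le u m" if "u \<in> C" "lt le u x" for u
    using C(2) max m that unfolding is_chain_def lt_def by blast
  hence "chain_pred C x = m" using chain_pred_eqI[OF C(1) m] by blast
  thus "chain_pred C x \<in> C" "lt le (chain_pred C x) x"
    and "u \<in> C \<Longrightarrow> lt le u x \<Longrightarrow> le u (chain_pred C x)"
    using m below_m by simp_all
qed

lemma chain_pred_of_successor:
  assumes C: "C \<subseteq> P" "is_chain C" and v: "v \<in> C" and w: "w \<in> C" "lt le v w"
    and succ: "\<forall>u\<in>C. lt le v u \<longrightarrow> \<not> lt le u w"
  shows "chain_pred C w = v"
proof (rule chain_pred_eqI[OF C(1) v w(2)], intro ballI impI)
  fix u assume "u \<in> C" "lt le u w"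
  thus "le u v" using C(2) v succ unfolding is_chain_def lt_def by blast
qed

lemma ex_chain_successor:
  assumes "C \<subseteq> P" "\<exists>w\<in>C. lt le v w"
  shows "\<exists>w\<in>C. lt le v w \<and> (\<forall>u\<in>C. lt le v u \<longrightarrow> \<not> lt le u w)"
  using ex_minimal[of "{w\<in>C. lt le v w}"] assms by blast

end

locale labeled_tree = tree_poset +
  fixes M :: "'a \<Rightarrow> nat"
  assumes labeling: "M \<in> labelings P"
begin

abbreviation "pc \<equiv> pchain P le M"
abbreviation "ls \<equiv> lsucc P le M"

lemma inj_M: "x \<in> P \<Longrightarrow> y \<in> P \<Longrightarrow> M x = M y \<Longrightarrow> x = y"
  using labeling unfolding labelings_def bij_betw_def inj_on_def by blast

lemma M_range: "x \<in> P \<Longrightarrow> 1 \<le> M x \<and> M x \<le> card P"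
  using labeling unfolding labelings_def bij_betw_def by auto

lemma lsucc:
  assumes v: "v \<in> P" "v \<noteq> root"
  shows "ls v \<in> P" "lt le v (ls v)" "z \<in> P \<Longrightarrow> lt le v z \<Longrightarrow> M (ls v) \<le> M z"
proof -
  have "\<exists>y. y \<in> P \<and> lt le v y \<and> (\<forall>z\<in>P. lt le v z \<longrightarrow> M y \<le> M z)"
    using ex_has_least_nat[of "\<lambda>y. y \<in> P \<and> lt le v y" root M] lt_root[OF v] root_in_P by blast
  hence "ls v \<in> P \<and> lt le v (ls v) \<and> (\<forall>z\<in>P. lt le v z \<longrightarrow> M (ls v) \<le> M z)"
    unfolding lsucc_def by (rule someI_ex)
  thus "ls v \<in> P" "lt le v (ls v)" "z \<in> P \<Longrightarrow> lt le v z \<Longrightarrow> M (ls v) \<le> M z" by blast+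
qed

lemma lsucc_eqI:
  assumes "v \<in> P" "v \<noteq> root" "w \<in> P" "lt le v w" "\<forall>z\<in>P. lt le v z \<longrightarrow> M w \<le> M z"
  shows "ls v = w"
  using lsucc[OF assms(1,2)] assms(3-) inj_M by (meson le_antisym)

lemma pchain_step: "v \<in> pc \<Longrightarrow> v \<noteq> root \<Longrightarrow> ls v \<in> pc"
  by (rule pchain.step) (simp_all add: maximal_iff_root)

lemma pchain_subset: "pc \<subseteq> P"
proof
  show "x \<in> P" if "x \<in> pc" for x
    using that by induction (use lsucc maximal_iff_root in auto)
qed

lemma pchain_above_start: "x \<in> pc \<Longrightarrow> s \<in> P \<Longrightarrow> M s = 1 \<Longrightarrow> le s x"
proof (induction rule: pchain.induct)
  case (start x) thus ?case using inj_M poset_refl by metis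
next
  case (step v)
  thus ?case
    using lsucc[of v] pchain_subset maximal_iff_root poset_trans[of s v "ls v"] by (auto simp: lt_def)
qed

lemma pchain_comparable: "x \<in> pc \<Longrightarrow> y \<in> pc \<Longrightarrow> le x y \<or> le y x"
proof (induction arbitrary: y rule: pchain.induct)
  case (start x) thus ?case using pchain_above_start by blast
next
  case (step u)
  have "u \<in> P" "y \<in> P" using step pchain_subset by auto
  moreover have "ls u \<in> P" "lt le u (ls u)" using lsucc calculation step maximal_iff_root by auto
  ultimately show ?case
    using step.IH[OF step.prems] upper_bounds_comparable[of u "ls u" y] poset_trans[of y u "ls u"]
    by (auto simp: lt_def)
qed

lemma pchain_is_chain: "is_chain pc"
  using pchain_comparable by (simp add: is_chain_def)

text \<open>Induction on w: writing w = ls w', comparing w' with v gives a smaller counterexample.\<close>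
lemma pchain_no_gap:
  assumes "v \<in> pc" "w \<in> pc" "lt le v w" shows "\<not> lt le w (ls v)"
  using assms
proof (induction w arbitrary: v rule: wf_induct_rule[OF wf_strict_below])
  case (1 w)
  have vP: "v \<in> P" and wP: "w \<in> P" using "1.prems" pchain_subset by auto
  have "v \<noteq> root" using "1.prems"(3) not_root_lt wP by blast
  from \<open>w \<in> pc\<close> show ?case
  proof cases
    case start
    hence "le w v" using pchain_above_start "1.prems"(1) wP by blast
    thus ?thesis using "1.prems"(3) vP wP lt_asym by (auto simp: lt_def)
  next
    case (step w')
    have "w' \<noteq> root" using step maximal_iff_root by blast
    have w'P: "w' \<in> P" using step pchain_subset by blast
    have "lt le w' w" using lsucc(2)[OF w'P \<open>w' \<noteq> root\<close>] step by simp
    have "w' = v \<or> lt le w' v \<or> lt le v w'"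
      using pchain_comparable[OF step(2) "1.prems"(1)] by (auto simp: lt_def)
    moreover have "\<not> lt le w' v"
    proof
      assume "lt le w' v"
      moreover have "(v, w) \<in> strict_below" using "1.prems"(3) vP wP by (simp add: strict_below_def)
      ultimately have "\<not> lt le v (ls w')" using "1.IH" "1.prems"(1) step by blast
      thus False using step "1.prems"(3) by simp
    qed
    moreover have "\<not> lt le v w'" if "lt le w (ls v)"
    proof
      assume "lt le v w'"
      moreover have "(w', w) \<in> strict_below" using \<open>lt le w' w\<close> w'P wP by (simp add: strict_below_def)
      ultimately have "\<not> lt le w' (ls v)" using "1.IH" "1.prems"(1) step by blast
      thus False using lt_trans[OF w'P wP lsucc(1)[OF vP \<open>v \<noteq> root\<close>] \<open>lt le w' w\<close> that] by blast
    qed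
    ultimately show ?thesis using step lt_irrefl by blast
  qed
qed

lemma lsucc_le_pchain:
  assumes "v \<in> pc" "v \<noteq> root" "u \<in> pc" "lt le v u"
  shows "le (ls v) u"
proof -
  have "le (ls v) u \<or> le u (ls v)"
    using pchain_comparable[OF pchain_step[OF assms(1,2)] assms(3)] .
  thus ?thesis using pchain_no_gap[OF assms(1,3,4)] by (auto simp: lt_def)
qed

lemma root_in_pchain: "root \<in> pc"
proof (rule ccontr)
  assume no_root: "root \<notin> pc"
  have "1 \<in> {1..card P}" using finite_P P_nonempty by (simp add: Suc_leI card_gt_0_iff)
  also have "{1..card P} = M ` P" using labeling by (simp add: labelings_def bij_betw_def)
  finally obtain s where "s \<in> P" "M s = 1" by (auto simp: image_iff)
  hence "s \<in> pc" by (rule pchain.start)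
  then obtain m where m: "m \<in> pc" "\<forall>y\<in>pc. \<not> lt le m y"
    using ex_maximal[OF pchain_subset] by blast
  have "m \<noteq> root" using m(1) no_root by blast
  have "m \<in> P" using m(1) pchain_subset by blast
  have "ls m \<in> pc" using pchain_step[OF m(1) \<open>m \<noteq> root\<close>] .
  moreover have "lt le m (ls m)" using lsucc(2)[OF \<open>m \<in> P\<close> \<open>m \<noteq> root\<close>] .
  ultimately show False using m(2) by blast
qed

lemma lsucc_label_less:
  assumes "v \<in> P" "v \<noteq> root" "z \<in> P" "lt le v z" "z \<noteq> ls v"
  shows "M (ls v) < M z"
proof -
  have "M (ls v) \<le> M z" using lsucc(3)[OF assms(1,2,3,4)] .
  moreover have "M (ls v) \<noteq> M z" using inj_M[OF lsucc(1)[OF assms(1,2)] assms(3)] assms(5) by metis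
  ultimately show ?thesis by simp
qed

lemma pchain_cases:
  assumes "x \<in> pc"
  obtains "M x = 1" "\<forall>v\<in>pc. \<not> lt le v x"
    | w where "w \<in> pc" "w \<noteq> root" "x = ls w" "chain_pred pc x = w"
  using assms
proof cases
  case start
  have "\<not> lt le v x" if "v \<in> pc" for v
  proof -
    have "v \<in> P" "le x v" using pchain_above_start[OF that start(1,2)] that pchain_subset by auto
    thus ?thesis using start(1) poset_antisym by (auto simp: lt_def)
  qed
  thus thesis using start that(1) by blast
next
  case (step w)
  have "w \<noteq> root" using step(3) maximal_iff_root by blast
  have wP: "w \<in> P" and xP: "x \<in> P" using step assms pchain_subset by auto
  have w_x: "lt le w x" using lsucc(2)[OF wP \<open>w \<noteq> root\<close>] step(1) by simp
  have "le u w" if u: "u \<in> pc" "lt le u x" for u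
  proof -
    have "u \<in> P" using u(1) pchain_subset by blast
    have "\<not> lt le w u"
    proof
      assume "lt le w u"
      hence "le x u" using lsucc_le_pchain[OF step(2) \<open>w \<noteq> root\<close> u(1)] step(1) by simp
      thus False using u(2) \<open>u \<in> P\<close> xP poset_antisym by (auto simp: lt_def)
    qed
    thus ?thesis using pchain_comparable[OF u(1) step(2)] by (auto simp: lt_def)
  qed
  hence "chain_pred pc x = w"
    using chain_pred_eqI[OF pchain_subset step(2) w_x] by blast
  thus thesis using that(2) step \<open>w \<noteq> root\<close> by blast
qed

end

locale promotion_target = tree_poset +
  fixes L :: "'a \<Rightarrow> nat"
  assumes bij_L: "bij_betw L P {1..card P}"
    and top_label_maximal: "\<forall>x\<in>P. L x = card P \<longrightarrow> maximal P le x"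
begin

lemma inj_L: "x \<in> P \<Longrightarrow> y \<in> P \<Longrightarrow> L x = L y \<Longrightarrow> x = y"
  using bij_L unfolding bij_betw_def inj_on_def by blast

lemma L_range: "x \<in> P \<Longrightarrow> 1 \<le> L x \<and> L x \<le> card P"
  using bij_L unfolding bij_betw_def by auto

lemma L_root: "L root = card P"
proof -
  have "card P \<in> {1..card P}" using finite_P P_nonempty by (simp add: Suc_leI card_gt_0_iff)
  also have "{1..card P} = L ` P" using bij_L by (simp add: bij_betw_def)
  finally obtain y where "y \<in> P" "L y = card P" by (auto simp: image_iff)
  moreover from this have "y = root" using top_label_maximal maximal_iff_root by blast
  ultimately show ?thesis by simp
qed

lemma L_less_card: "x \<in> P \<Longrightarrow> x \<noteq> root \<Longrightarrow> L x < card P"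
  using L_range L_root inj_L root_in_P by (metis le_neq_implies_less)

lemma golden_root: "golden P le L root"
  using root_in_P not_root_lt by (simp add: golden_def)

definition preimages :: "('a \<Rightarrow> nat) set" where
  "preimages = {M \<in> labelings P. \<forall>x\<in>P. promote P le M x = L x}"

definition golden_chains :: "'a set set" where
  "golden_chains = {C. C \<subseteq> P \<and> root \<in> C \<and> is_chain C \<and> (\<forall>x\<in>C. golden P le L x)}"

text \<open>The preimage of L whose promotion chain is C.\<close>
definition chain_labeling :: "'a set \<Rightarrow> 'a \<Rightarrow> nat" where
  "chain_labeling C x =
     (if x \<notin> P then 0
      else if x \<notin> C then L x + 1
      else if \<exists>v\<in>C. lt le v x then L (chain_pred C x) + 1
      else 1)"

end

locale promotion_preimage = promotion_target P le L + labeled_tree P le M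
  for P :: "'a set" and le L M +
  assumes promote_M: "\<forall>x\<in>P. promote P le M x = L x"
begin

lemma label_off_pchain: "x \<in> P \<Longrightarrow> x \<notin> pc \<Longrightarrow> M x = L x + 1"
  using promote_M M_range[of x] by (auto simp: promote_def)

lemma label_lsucc: "v \<in> pc \<Longrightarrow> v \<noteq> root \<Longrightarrow> M (ls v) = L v + 1"
  using promote_M pchain_subset M_range lsucc(1)[of v]
  by (force simp: promote_def maximal_iff_root)

lemma pchain_golden:
  assumes v: "v \<in> pc" shows "golden P le L v"
proof (cases "v = root")
  case True thus ?thesis using golden_root by simp
next
  case False
  have vP: "v \<in> P" using v pchain_subset by blast
  have "L v < L y" if y: "y \<in> P" "lt le v y" for y
  proof (cases "y \<in> pc")
    case True
    show ?thesis
    proof (cases "y = root")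
      case True thus ?thesis using L_less_card[OF vP \<open>v \<noteq> root\<close>] L_root by simp
    next
      case False
      have "le (ls v) y" using lsucc_le_pchain[OF v \<open>v \<noteq> root\<close> \<open>y \<in> pc\<close> y(2)] .
      moreover have "ls y \<in> P" "lt le y (ls y)" using lsucc[OF y(1) False] by blast+
      ultimately have "lt le (ls v) (ls y)"
        using le_lt_trans[OF lsucc(1)[OF vP \<open>v \<noteq> root\<close>] y(1)] by blast
      moreover have "lt le v (ls y)" using lt_trans[OF vP y(1) \<open>ls y \<in> P\<close> y(2)] \<open>lt le y (ls y)\<close> .
      ultimately have "M (ls v) < M (ls y)"
        using lsucc_label_less[OF vP \<open>v \<noteq> root\<close> \<open>ls y \<in> P\<close>] by (auto simp: lt_def)
      thus ?thesis using label_lsucc[OF v \<open>v \<noteq> root\<close>] label_lsucc[OF \<open>y \<in> pc\<close> False] by simp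
    qed
  next
    case False
    have "y \<noteq> ls v" using pchain_step[OF v \<open>v \<noteq> root\<close>] False by blast
    hence "M (ls v) < M y" using lsucc_label_less[OF vP \<open>v \<noteq> root\<close> y] by blast
    thus ?thesis using label_lsucc[OF v \<open>v \<noteq> root\<close>] label_off_pchain[OF y(1) False] by simp
  qed
  thus ?thesis using vP by (simp add: golden_def)
qed

lemma pchain_in_golden_chains: "pc \<in> golden_chains"
  unfolding golden_chains_def
  using pchain_subset root_in_pchain pchain_is_chain pchain_golden by blast

lemma eq_chain_labeling: "M = chain_labeling pc"
proof
  fix x
  show "M x = chain_labeling pc x"
  proof (cases "x \<in> pc")
    case True
    thus ?thesis
    proof (cases rule: pchain_cases)
      case 1 thus ?thesis using True pchain_subset by (auto simp: chain_labeling_def)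
    next
      case (2 w)
      have "lt le w x" using lsucc(2)[of w] 2 pchain_subset by blast
      thus ?thesis using True 2 label_lsucc[of w] pchain_subset by (auto simp: chain_labeling_def)
    qed
  next
    case False
    thus ?thesis
      using label_off_pchain labeling by (auto simp: chain_labeling_def labelings_def)
  qed
qed

end

locale golden_chain = promotion_target +
  fixes C :: "'a set"
  assumes C_subset: "C \<subseteq> P" and root_in_C: "root \<in> C" and C_chain: "is_chain C"
    and C_golden: "\<forall>x\<in>C. golden P le L x"
begin

lemma golden_less: "v \<in> C \<Longrightarrow> y \<in> P \<Longrightarrow> lt le v y \<Longrightarrow> L v < L y"
  using C_golden by (auto simp: golden_def)

lemma ex_successor:
  assumes "v \<in> C" "v \<noteq> root"
  obtains w where "w \<in> C" "lt le v w" "\<forall>u\<in>C. lt le v u \<longrightarrow> \<not> lt le u w"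
  using ex_chain_successor[OF C_subset] lt_root root_in_C assms C_subset by blast

lemma chain_labeling_successor:
  assumes "v \<in> C" "w \<in> C" "lt le v w" "\<forall>u\<in>C. lt le v u \<longrightarrow> \<not> lt le u w"
  shows "chain_labeling C w = L v + 1"
  using chain_pred_of_successor[OF C_subset C_chain assms] assms C_subset
  by (auto simp: chain_labeling_def)

lemma chain_labeling_range:
  assumes x: "x \<in> P" shows "chain_labeling C x \<in> {1..card P}"
proof -
  have "0 < card P" using x finite_P card_gt_0_iff by blast
  consider "x \<notin> C" | "x \<in> C" "\<exists>v\<in>C. lt le v x" | "x \<in> C" "\<not> (\<exists>v\<in>C. lt le v x)" by blast
  thus ?thesis
  proof cases
    case 1
    hence "x \<noteq> root" using root_in_C by blast
    thus ?thesis using L_less_card[OF x] 1 x by (simp add: chain_labeling_def)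
  next
    case 2
    have "chain_pred C x \<in> P" "lt le (chain_pred C x) x"
      using chain_pred(1,2)[OF C_subset C_chain 2(2)] C_subset by blast+
    hence "L (chain_pred C x) < card P" using L_less_card not_root_lt x by metis
    thus ?thesis using 2 x by (simp add: chain_labeling_def)
  next
    case 3
    thus ?thesis using x \<open>0 < card P\<close> by (simp add: chain_labeling_def)
  qed
qed

lemma chain_labeling_surj: "{1..card P} \<subseteq> chain_labeling C ` P"
proof
  fix k assume k: "k \<in> {1..card P}"
  show "k \<in> chain_labeling C ` P"
  proof (cases "k = 1")
    case True
    obtain m where m: "m \<in> C" "\<forall>y\<in>C. \<not> lt le y m" using ex_minimal C_subset root_in_C by blast
    hence "chain_labeling C m = 1" using C_subset by (auto simp: chain_labeling_def)
    thus ?thesis using True m C_subset by force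
  next
    case False
    hence "k - 1 \<in> L ` P" using k bij_L by (auto simp: bij_betw_def)
    then obtain x where x: "x \<in> P" "L x = k - 1" by auto
    hence "x \<noteq> root" using L_root k by auto
    show ?thesis
    proof (cases "x \<in> C")
      case True
      then obtain w where "w \<in> C" "lt le x w" "\<forall>u\<in>C. lt le x u \<longrightarrow> \<not> lt le u w"
        using ex_successor \<open>x \<noteq> root\<close> by blast
      moreover from this have "chain_labeling C w = k"
        using chain_labeling_successor True x False k by simp
      ultimately show ?thesis using C_subset by force
    next
      case False
      thus ?thesis using x \<open>k \<noteq> 1\<close> k by (force simp: chain_labeling_def)
    qed
  qed
qed

lemma chain_labeling_in_labelings: "chain_labeling C \<in> labelings P"
proof -
  have image: "chain_labeling C ` P = {1..card P}"
    using chain_labeling_range chain_labeling_surj by blast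
  hence "inj_on (chain_labeling C) P"
    using finite_P by (intro eq_card_imp_inj_on) simp_all
  thus ?thesis using image by (simp add: labelings_def bij_betw_def chain_labeling_def)
qed

end

sublocale golden_chain \<subseteq> labeled_tree P le "chain_labeling C"
  by unfold_locales (rule chain_labeling_in_labelings)

context golden_chain
begin

text \<open>Since v is golden, every element above v other than w gets a label L y + 1 with v < y.\<close>
lemma lsucc_chain_labeling:
  assumes v: "v \<in> C" "v \<noteq> root" and w: "w \<in> C" "lt le v w"
    and succ: "\<forall>u\<in>C. lt le v u \<longrightarrow> \<not> lt le u w"
  shows "ls v = w"
proof -
  have vP: "v \<in> P" and wP: "w \<in> P" using v w C_subset by auto
  have label_w: "chain_labeling C w = L v + 1"
    using chain_labeling_successor[OF v(1) w succ] .
  have "chain_labeling C w \<le> chain_labeling C z" if z: "z \<in> P" "lt le v z" for z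
  proof (cases "z \<in> C")
    case False
    thus ?thesis using label_w z golden_less[OF v(1) z] by (simp add: chain_labeling_def)
  next
    case True
    show ?thesis
    proof (cases "z = w")
      case False
      have "\<not> lt le z w" using succ True z by blast
      hence "lt le w z"
        using C_chain True w(1) False unfolding is_chain_def lt_def by blast
      hence below_z: "\<exists>v\<in>C. lt le v z" using w(1) by blast
      have "le w (chain_pred C z)" "chain_pred C z \<in> C"
        using chain_pred[OF C_subset C_chain below_z] w(1) \<open>lt le w z\<close> by blast+
      hence "lt le v (chain_pred C z)"
        using lt_le_trans[OF vP wP _ w(2)] C_subset by blast
      hence "L v < L (chain_pred C z)"
        using golden_less[OF v(1)] \<open>chain_pred C z \<in> C\<close> C_subset by blast
      thus ?thesis using label_w True z below_z by (simp add: chain_labeling_def)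
    qed simp
  qed
  thus ?thesis using lsucc_eqI[OF vP v(2) wP w(2)] by blast
qed

lemma pchain_subset_C: "x \<in> pc \<Longrightarrow> x \<in> C"
proof (induction rule: pchain.induct)
  case (start x)
  show ?case
  proof (rule ccontr)
    assume "x \<notin> C" thus False using start L_range[of x] by (simp add: chain_labeling_def)
  qed
next
  case (step v)
  have "v \<noteq> root" using step maximal_iff_root by blast
  then obtain w where "w \<in> C" "lt le v w" "\<forall>u\<in>C. lt le v u \<longrightarrow> \<not> lt le u w"
    using ex_successor step.IH by blast
  thus ?case using lsucc_chain_labeling[OF step.IH \<open>v \<noteq> root\<close>] by simp
qed

lemma C_subset_pchain: "x \<in> C \<Longrightarrow> x \<in> pc"
proof (induction x rule: wf_induct_rule[OF wf_strict_below])
  case (1 x)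
  have xP: "x \<in> P" using "1.prems" C_subset by blast
  show ?case
  proof (cases "\<exists>v\<in>C. lt le v x")
    case False
    hence "chain_labeling C x = 1" using "1.prems" xP by (simp add: chain_labeling_def)
    thus ?thesis by (rule pchain.start[OF xP])
  next
    case True
    let ?p = "chain_pred C x"
    have p: "?p \<in> C" "lt le ?p x" "\<And>u. u \<in> C \<Longrightarrow> lt le u x \<Longrightarrow> le u ?p"
      using chain_pred[OF C_subset C_chain True] by blast+
    have pP: "?p \<in> P" using p(1) C_subset by blast
    have "?p \<in> pc" using "1.IH"[of ?p] p pP xP by (simp add: strict_below_def)
    have "?p \<noteq> root" using not_root_lt[OF xP] p(2) by metis
    have "\<not> lt le u x" if "u \<in> C" "lt le ?p u" for u
      using p(3)[OF that(1)] that pP C_subset poset_antisym by (auto simp: lt_def)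
    hence "ls ?p = x" using lsucc_chain_labeling[OF p(1) \<open>?p \<noteq> root\<close> "1.prems" p(2)] by blast
    thus ?thesis using pchain_step[OF \<open>?p \<in> pc\<close> \<open>?p \<noteq> root\<close>] by simp
  qed
qed

lemma pchain_chain_labeling: "pc = C"
  using pchain_subset_C C_subset_pchain by blast

lemma chain_labeling_in_preimages: "chain_labeling C \<in> preimages"
proof -
  have "promote P le (chain_labeling C) x = L x" if x: "x \<in> P" for x
  proof (cases "x \<in> C")
    case False
    thus ?thesis using x pchain_chain_labeling by (simp add: promote_def chain_labeling_def)
  next
    case True
    show ?thesis
    proof (cases "x = root")
      case True
      thus ?thesis using root_in_C pchain_chain_labeling maximal_iff_root L_root
        by (simp add: promote_def)
    next
      case False
      then obtain w where "w \<in> C" "lt le x w" "\<forall>u\<in>C. lt le x u \<longrightarrow> \<not> lt le u w"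
        using ex_successor \<open>x \<in> C\<close> by blast
      thus ?thesis
        using lsucc_chain_labeling[OF \<open>x \<in> C\<close> False] chain_labeling_successor[OF \<open>x \<in> C\<close>]
          pchain_chain_labeling \<open>x \<in> C\<close> False maximal_iff_root
        by (simp add: promote_def)
    qed
  qed
  thus ?thesis using chain_labeling_in_labelings by (simp add: preimages_def)
qed

end

context promotion_target
begin

lemma promotion_preimageI:
  assumes "M \<in> preimages" shows "promotion_preimage P le L M"
proof -
  interpret labeled_tree P le M
    using assms by unfold_locales (simp add: preimages_def)
  show ?thesis using assms by unfold_locales (simp add: preimages_def)
qed

lemma golden_chainI:
  assumes "C \<in> golden_chains" shows "golden_chain P le L C"
  using assms by unfold_locales (simp_all add: golden_chains_def)

lemma bij_betw_pchain: "bij_betw (pchain P le) preimages golden_chains"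
proof (rule bij_betw_byWitness[where f' = chain_labeling])
  show "\<forall>M\<in>preimages. chain_labeling (pchain P le M) = M"
    using promotion_preimage.eq_chain_labeling promotion_preimageI by metis
  show "\<forall>C\<in>golden_chains. pchain P le (chain_labeling C) = C"
    using golden_chain.pchain_chain_labeling golden_chainI by metis
  show "pchain P le ` preimages \<subseteq> golden_chains"
    using promotion_preimage.pchain_in_golden_chains promotion_preimageI by blast
  show "chain_labeling ` golden_chains \<subseteq> preimages"
    using golden_chain.chain_labeling_in_preimages golden_chainI by blast
qed

lemma card_golden_chains_eq_card_chains:
  "card golden_chains = card {S. S \<subseteq> {x\<in>P. golden P le L x} - {root} \<and> is_chain S}"
proof (rule bij_betw_same_card[of "\<lambda>C. C - {root}"], rule bij_betw_byWitness[where f' = "insert root"])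
  show "\<forall>C\<in>golden_chains. insert root (C - {root}) = C"
    by (auto simp: golden_chains_def)
  show "\<forall>S\<in>{S. S \<subseteq> {x\<in>P. golden P le L x} - {root} \<and> is_chain S}. insert root S - {root} = S"
    by blast
  show "(\<lambda>C. C - {root}) ` golden_chains \<subseteq> {S. S \<subseteq> {x\<in>P. golden P le L x} - {root} \<and> is_chain S}"
    by (auto simp: golden_chains_def is_chain_def)
  have "is_chain (insert root S)" if "S \<subseteq> P" "is_chain S" for S
    using that le_root poset_refl root_in_P unfolding is_chain_def by blast
  thus "insert root ` {S. S \<subseteq> {x\<in>P. golden P le L x} - {root} \<and> is_chain S} \<subseteq> golden_chains"
    using root_in_P golden_root by (auto simp: golden_chains_def)
qed

lemma card_golden_chains:
  defines "U \<equiv> {x\<in>P. golden P le L x \<and> le (hbv P le) x}"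
    and "G \<equiv> {x\<in>P. golden P le L x \<and> lt le x (hbv P le)}"
  shows "card golden_chains = 2 ^ (card U - 1) + (\<Sum>x\<in>G. 2 ^ (card {y\<in>G. le x y} + card U - 2))"
proof -
  have "root \<in> U" using golden_root root_in_P le_root hbv_in_P unfolding U_def by blast
  have "finite U" "finite G" using finite_P unfolding U_def G_def by simp_all
  have card_U: "card (U - {root}) = card U - 1" "0 < card U"
    using \<open>finite U\<close> \<open>root \<in> U\<close> card_gt_0_iff by auto
  have golden_split: "{x\<in>P. golden P le L x} - {root} = G \<union> (U - {root})"
    using hbv_comparable not_root_lt hbv_in_P unfolding U_def G_def by auto
  have "card golden_chains = card {S. S \<subseteq> G \<union> (U - {root}) \<and> is_chain S}"
    using card_golden_chains_eq_card_chains golden_split by simp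
  also have "\<dots> = 2 ^ card (U - {root}) + (\<Sum>x\<in>G. 2 ^ (card {y\<in>G. lt le x y} + card (U - {root})))"
  proof (rule card_chains_below_chain)
    show "G \<subseteq> P" "U - {root} \<subseteq> P" unfolding U_def G_def by auto
    show "G \<inter> (U - {root}) = {}"
      using hbv_in_P poset_antisym unfolding U_def G_def lt_def by auto
    show "is_chain (U - {root})"
      using upper_bounds_comparable hbv_in_P unfolding U_def is_chain_def by auto
    fix x u assume "x \<in> G" "u \<in> U - {root}"
    thus "lt le x u" using lt_le_trans[OF _ hbv_in_P] unfolding U_def G_def by auto
  qed
  also have "\<dots> = 2 ^ (card U - 1) + (\<Sum>x\<in>G. 2 ^ (card {y\<in>G. le x y} + card U - 2))"
  proof -
    have "card {y\<in>G. lt le x y} + card (U - {root}) = card {y\<in>G. le x y} + card U - 2"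
      if "x \<in> G" for x
    proof -
      have "{y\<in>G. le x y} = insert x {y\<in>G. lt le x y}"
        using that poset_refl unfolding G_def lt_def by auto
      hence "card {y\<in>G. le x y} = card {y\<in>G. lt le x y} + 1"
        using \<open>finite G\<close> by (simp add: lt_def)
      thus ?thesis using card_U by simp
    qed
    thus ?thesis using card_U(1) by simp
  qed
  finally show ?thesis .
qed

end

theorem mainTheorem3:
  fixes P :: "'a set" and le :: "'a \<Rightarrow> 'a \<Rightarrow> bool" and L :: "'a \<Rightarrow> nat"
  assumes "rooted_tree P le"
    and "bij_betw L P {1..card P}"
    and "\<forall>x\<in>P. L x = card P \<longrightarrow> maximal P le x"
  shows "card {L' \<in> labelings P. \<forall>x\<in>P. promote P le L' x = L x}
       = 2 ^ (card {x\<in>P. golden P le L x \<and> le (hbv P le) x} - 1)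
         + (\<Sum>T\<in>goldenM P le L. \<Sum>x\<in>T.
              2 ^ (omega T le x + card {x\<in>P. golden P le L x \<and> le (hbv P le) x} - 2))"
proof -
  interpret promotion_target P le L
    using assms by unfold_locales
  let ?k = "card {x\<in>P. golden P le L x \<and> le (hbv P le) x}"
  let ?G = "{x\<in>P. golden P le L x \<and> lt le x (hbv P le)}"
  have "card {L' \<in> labelings P. \<forall>x\<in>P. promote P le L' x = L x} = card golden_chains"
    using bij_betw_same_card[OF bij_betw_pchain] by (simp add: preimages_def)
  also have "\<dots> = 2 ^ (?k - 1) + (\<Sum>x\<in>?G. 2 ^ (card {y\<in>?G. le x y} + ?k - 2))"
    by (rule card_golden_chains)
  also have "(\<Sum>x\<in>?G. 2 ^ (card {y\<in>?G. le x y} + ?k - 2))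
      = (\<Sum>T\<in>goldenM P le L. \<Sum>x\<in>T. (2::nat) ^ (omega T le x + ?k - 2))"
    unfolding goldenM_def Let_def maximal_subtrees_def[symmetric]
    by (rule sum_maximal_subtrees[symmetric]) blast
  finally show ?thesis .
qed

end
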